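(* Let $n\ge 2$ and consider $n+1$ qubits labelled $1,\dots,n+1$. Qubit $1$ holds an arbitrary single-qubit pure state $|\psi\rangle$ to be teleported, and qubits $2,\dots,n+1$ hold an $n$-qubit state $\rho$ (the channel), so the initial state is $\rho'=|\psi\rangle\langle\psi|\otimes\rho$. Qubit $S=2$ is the sender's qubit, qubit $R=n+1$ is the receiver's qubit, and the qubits in $X=\{3,\dots,n\}$ may be held by the sender and/or any number of controllers. Consider a teleportation protocol of the following form: a (possibly non-local) unitary $V$ acting on qubits $[n]=\{1,\dots,n\}$ is applied; then the qubits in $X$ are measured in the basis $\{U^\dagger|t\rangle\}_t$ for some unitary $U$ on the qubits of $X$ ($t$ ranging over computational-basis outcomes of $X$); qubits $1$ and $2$ undergo a Bell measurement; and finally a classically conditioned unitary $W$, depending on all measurement outcomes, is applied to qubit $R$, producing the receiver state $\rho_T$. Define $\rho_X$ as the reduced state of $V\rho' V^\dagger$ on the qubits of $X$, $p_t(U)=\langle t|U\rho_X U^\dagger|t\rangle$, and for $p_t(U)>0$ the conditional two-qubit state of $S$ and $R$ $$\rho_{SR}^t=\frac{\mathrm{Tr}_X\!\left\{\left(U^\dagger|t\rangle\langle t|U\right)_X\,\mathrm{Tr}_1\!\left\{V\rho'V^\dagger\right\}\left(U^\dagger|t\rangle\langle t|U\right)_X\right\}}{p_t(U)}.$$ Define the localizable concurrence $\mathcal{C}_L(\rho)=\max_U\sum_t p_t(U)\,\mathcal{C}(\rho_{SR}^t)$ and the teleportation fidelity $F_T(\rho)=\max_U\sum_t p_t(U)\,F(\rho_{SR}^t)$.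 Then $$\max\left\{\frac{3+\mathcal{C}_L(\rho)}{6},\ \frac{1+2\mathcal{C}_L(\rho)}{3}\right\}\le F_T(\rho)\le\frac{2+\mathcal{C}_L(\rho)}{3}.$$
   Context: $\mathcal{C}(\sigma)$ denotes the Wootters concurrence of a two-qubit state $\sigma$. $F(\sigma)$ denotes the (optimal, average over input states) fidelity of teleporting one qubit using the two-qubit state $\sigma$ as the shared resource in the standard protocol (Bell measurement by the sender, two classical bits, local correction by the receiver); it is a known fact that for every two-qubit state $\sigma$, $\max\{\frac{3+\mathcal{C}(\sigma)}{6},\frac{1+2\mathcal{C}(\sigma)}{3}\}\le F(\sigma)\le \frac{2+\mathcal{C}(\sigma)}{3}$. Subscripts on operators indicate the qubits they act on; $\mathrm{Tr}_1$ is the partial trace over qubit $1$ and $\mathrm{Tr}_X$ the partial trace over the qubits in $X$. *)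

theory Defs
  imports Complex_Main "Jordan_Normal_Form.Char_Poly"
begin

(* A computational
   basis state of a finite set Q of qubits is identified with the subset a \<subseteq> Q of
   qubits that are in state |1>.  An operator on the qubits Q is a matrix indexed by
   Pow Q \<times> Pow Q; we represent it as a function (entries outside Pow Q are irrelevant). *)
type_synonym qop = "nat set \<Rightarrow> nat set \<Rightarrow> complex"
type_synonym qvec = "nat set \<Rightarrow> complex"

definition op_mult :: "nat set \<Rightarrow> qop \<Rightarrow> qop \<Rightarrow> qop" where
  "op_mult Q A B = (\<lambda>a b. \<Sum>c\<in>Pow Q. A a c * B c b)"

definition op_adj :: "qop \<Rightarrow> qop" where
  "op_adj A = (\<lambda>a b. cnj (A b a))"

definition op_id :: qop where
  "op_id = (\<lambda>a b. if a = b then 1 else 0)"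

definition unitary_op :: "nat set \<Rightarrow> qop \<Rightarrow> bool" where
  "unitary_op Q U \<longleftrightarrow>
     (\<forall>a\<in>Pow Q. \<forall>b\<in>Pow Q. op_mult Q U (op_adj U) a b = op_id a b
                         \<and> op_mult Q (op_adj U) U a b = op_id a b)"

definition density_op :: "nat set \<Rightarrow> qop \<Rightarrow> bool" where
  "density_op Q \<rho> \<longleftrightarrow>
     (\<Sum>a\<in>Pow Q. \<rho> a a) = 1 \<and>
     (\<forall>v :: qvec. Im (\<Sum>a\<in>Pow Q. \<Sum>b\<in>Pow Q. cnj (v a) * \<rho> a b * v b) = 0 \<and>
                  Re (\<Sum>a\<in>Pow Q. \<Sum>b\<in>Pow Q. cnj (v a) * \<rho> a b * v b) \<ge> 0)"

definition unit_vec :: "nat set \<Rightarrow> qvec \<Rightarrow> bool" where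
  "unit_vec Q v \<longleftrightarrow> (\<Sum>a\<in>Pow Q. cnj (v a) * v a) = 1"

text \<open>A \<otimes> I: the operator A acting on the qubits Y, extended by the identity on the
  remaining qubits.\<close>
definition embed :: "nat set \<Rightarrow> qop \<Rightarrow> qop" where
  "embed Y A = (\<lambda>a b. if a - Y = b - Y then A (a \<inter> Y) (b \<inter> Y) else 0)"

definition ptrace :: "nat set \<Rightarrow> qop \<Rightarrow> qop" where
  "ptrace Y M = (\<lambda>a b. \<Sum>c\<in>Pow Y. M (a \<union> c) (b \<union> c))"

definition proj_tensor :: "nat set \<Rightarrow> qvec \<Rightarrow> qop \<Rightarrow> qop" where
  "proj_tensor P \<psi> \<rho> = (\<lambda>a b. \<psi> (a \<inter> P) * cnj (\<psi> (b \<inter> P)) * \<rho> (a - P) (b - P))"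

(* Two-qubit states as 4x4 matrices (Jordan_Normal_Form); the basis |ij>, i for the
   first qubit, j for the second, is ordered as index 2*i + j. *)

definition to_2qubit :: "nat \<Rightarrow> nat \<Rightarrow> qop \<Rightarrow> complex mat" where
  "to_2qubit S R M = mat 4 4 (\<lambda>(i, j).
      M ((if i div 2 = 1 then {S} else {}) \<union> (if i mod 2 = 1 then {R} else {}))
        ((if j div 2 = 1 then {S} else {}) \<union> (if j mod 2 = 1 then {R} else {})))"

definition two_qubit_state :: "complex mat \<Rightarrow> bool" where
  "two_qubit_state \<sigma> \<longleftrightarrow> \<sigma> \<in> carrier_mat 4 4 \<and> (\<Sum>i<4. \<sigma> $$ (i, i)) = 1 \<and>
     (\<forall>v :: nat \<Rightarrow> complex.
        Im (\<Sum>i<4. \<Sum>j<4. cnj (v i) * \<sigma> $$ (i, j) * v j) = 0 \<and>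
        Re (\<Sum>i<4. \<Sum>j<4. cnj (v i) * \<sigma> $$ (i, j) * v j) \<ge> 0)"

definition sigma_yy :: "complex mat" where
  "sigma_yy = mat 4 4 (\<lambda>(i, j). if i + j = 3 then (if i = 0 \<or> i = 3 then -1 else 1) else 0)"

text \<open>Wootters concurrence: C = max(0, l1 - l2 - l3 - l4), where l1 \<ge> ... \<ge> l4 are the
  square roots of the eigenvalues (with multiplicity) of \<sigma> (\<sigma>_y\<otimes>\<sigma>_y) \<sigma>^* (\<sigma>_y\<otimes>\<sigma>_y).\<close>
definition concurrence :: "complex mat \<Rightarrow> real" where
  "concurrence \<sigma> =
    (let Rm = \<sigma> * (sigma_yy * map_mat cnj \<sigma> * sigma_yy);
         ls = (SOME ls :: real list. length ls = 4 \<and> sorted_wrt (\<ge>) ls \<and> (\<forall>x\<in>set ls. x \<ge> 0) \<and>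
                 char_poly Rm = prod_list (map (\<lambda>x. [:- complex_of_real (x\<^sup>2), 1:]) ls))
     in max 0 (ls ! 0 - ls ! 1 - ls ! 2 - ls ! 3))"

definition evolved :: "nat \<Rightarrow> qvec \<Rightarrow> qop \<Rightarrow> qop \<Rightarrow> qop" where
  "evolved n \<psi> \<rho> V =
     op_mult {1..n+1} (op_mult {1..n+1} (embed {1..n} V) (proj_tensor {1} \<psi> \<rho>))
                      (op_adj (embed {1..n} V))"

definition prob_t :: "nat \<Rightarrow> qvec \<Rightarrow> qop \<Rightarrow> qop \<Rightarrow> qop \<Rightarrow> nat set \<Rightarrow> real" where
  "prob_t n \<psi> \<rho> V U t =
     (let \<rho>X = ptrace ({1..n+1} - {3..n}) (evolved n \<psi> \<rho> V)
      in Re (\<Sum>a\<in>Pow {3..n}. \<Sum>b\<in>Pow {3..n}. U t a * \<rho>X a b * cnj (U t b)))"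

definition meas_proj :: "qop \<Rightarrow> nat set \<Rightarrow> qop" where
  "meas_proj U t = (\<lambda>a b. cnj (U t a) * U t b)"

definition cond_state :: "nat \<Rightarrow> qvec \<Rightarrow> qop \<Rightarrow> qop \<Rightarrow> qop \<Rightarrow> nat set \<Rightarrow> qop" where
  "cond_state n \<psi> \<rho> V U t =
     (let Q1 = {2..n+1};
          M = ptrace {1} (evolved n \<psi> \<rho> V);
          P = embed {3..n} (meas_proj U t)
      in (\<lambda>a b. ptrace {3..n} (op_mult Q1 (op_mult Q1 P M) P) a b
                 / complex_of_real (prob_t n \<psi> \<rho> V U t)))"

definition localizable_concurrence :: "nat \<Rightarrow> qvec \<Rightarrow> qop \<Rightarrow> qop \<Rightarrow> real" where
  "localizable_concurrence n \<psi> \<rho> V =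
     (SUP U\<in>{U. unitary_op {3..n} U}.
        \<Sum>t\<in>{t. t \<subseteq> {3..n} \<and> prob_t n \<psi> \<rho> V U t > 0}.
          prob_t n \<psi> \<rho> V U t * concurrence (to_2qubit 2 (n+1) (cond_state n \<psi> \<rho> V U t)))"

definition teleportation_fidelity ::
    "(complex mat \<Rightarrow> real) \<Rightarrow> nat \<Rightarrow> qvec \<Rightarrow> qop \<Rightarrow> qop \<Rightarrow> real" where
  "teleportation_fidelity F n \<psi> \<rho> V =
     (SUP U\<in>{U. unitary_op {3..n} U}.
        \<Sum>t\<in>{t. t \<subseteq> {3..n} \<and> prob_t n \<psi> \<rho> V U t > 0}.
          prob_t n \<psi> \<rho> V U t * F (to_2qubit 2 (n+1) (cond_state n \<psi> \<rho> V U t)))"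

end

theory Submission
  imports Defs
begin

(* The outcome probabilities p_t(U), t \<subseteq> X, sum to one, and each conditional state
   \<rho>_SR^t with p_t(U) > 0 is a genuine two-qubit state (positive semidefinite with unit
   trace), so the known bounds relate F(\<rho>_SR^t) and C(\<rho>_SR^t) for every such t.  The
   region {(C, F). max ((3 + C)/6) ((1 + 2C)/3) \<le> F \<le> (2 + C)/3} is convex, so the
   bounds survive averaging over t with the weights p_t(U); and since every bound is
   monotone and affine in both C and F, they also survive taking the suprema over U
   separately on both sides. *)

section \<open>Positive semidefinite operators and traces\<close>

definition qform :: "nat set \<Rightarrow> qop \<Rightarrow> qvec \<Rightarrow> complex" where
  "qform Q A v = (\<Sum>a\<in>Pow Q. \<Sum>b\<in>Pow Q. cnj (v a) * A a b * v b)"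

definition psd_op :: "nat set \<Rightarrow> qop \<Rightarrow> bool" where
  "psd_op Q A \<longleftrightarrow> (\<forall>v. Im (qform Q A v) = 0 \<and> Re (qform Q A v) \<ge> 0)"

definition op_trace :: "nat set \<Rightarrow> qop \<Rightarrow> complex" where
  "op_trace Q A = (\<Sum>a\<in>Pow Q. A a a)"

lemma density_op_iff_trace_psd: "density_op Q A \<longleftrightarrow> op_trace Q A = 1 \<and> psd_op Q A"
  by (simp add: density_op_def op_trace_def psd_op_def qform_def)

lemmas if_distrib_mult_cnj =
  if_distrib[where f = "\<lambda>y. y * _"] if_distrib[where f = "\<lambda>y. _ * y"] if_distrib[where f = cnj]

lemma sum_Pow_Un:
  assumes "finite A" "finite B" "A \<inter> B = {}"
  shows "sum f (Pow (A \<union> B)) = (\<Sum>x\<in>Pow A. \<Sum>y\<in>Pow B. f (x \<union> y))"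
proof -
  have "(\<Sum>(x, y)\<in>Pow A \<times> Pow B. f (x \<union> y)) = sum f (Pow (A \<union> B))"
    by (rule sum.reindex_bij_witness[where i = "\<lambda>s. (s \<inter> A, s \<inter> B)" and j = "\<lambda>(x, y). x \<union> y"])
      (use assms(3) in auto)
  then show ?thesis
    by (simp add: sum.cartesian_product)
qed

lemma sum_rotate3:
  "(\<Sum>a\<in>A. \<Sum>b\<in>B. \<Sum>c\<in>C. f a b c) = (\<Sum>b\<in>B. \<Sum>c\<in>C. \<Sum>a\<in>A. f a b c)"
  by (subst sum.swap) (simp only: sum.swap[of _ A])

lemma sum_swap_pairs:
  "(\<Sum>a\<in>A. \<Sum>b\<in>B. \<Sum>c\<in>C. \<Sum>d\<in>D. f a b c d) = (\<Sum>c\<in>C. \<Sum>d\<in>D. \<Sum>a\<in>A. \<Sum>b\<in>B. f a b c d)"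
  by (simp only: sum_rotate3[of _ B] sum_rotate3[of _ A])

lemma psd_op_diag:
  assumes "psd_op Q A" "finite Q" "a \<in> Pow Q"
  shows "Im (A a a) = 0 \<and> Re (A a a) \<ge> 0"
proof -
  have "qform Q A (\<lambda>d. if d = a then 1 else 0) = A a a"
    using assms(2,3) by (simp add: qform_def if_distrib_mult_cnj cong: if_cong)
  then show ?thesis
    using assms(1) unfolding psd_op_def by metis
qed

lemma op_trace_psd:
  assumes "psd_op Q A" "finite Q"
  shows "Im (op_trace Q A) = 0 \<and> Re (op_trace Q A) \<ge> 0"
  using psd_op_diag[OF assms] by (auto simp: op_trace_def intro!: sum_nonneg sum.neutral)

lemma qform_conj:
  "qform Q (op_mult Q (op_mult Q A B) (op_adj A)) v = qform Q B (\<lambda>c. \<Sum>a\<in>Pow Q. cnj (A a c) * v a)"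
proof -
  have "qform Q (op_mult Q (op_mult Q A B) (op_adj A)) v =
     (\<Sum>a\<in>Pow Q. \<Sum>b\<in>Pow Q. \<Sum>d\<in>Pow Q. \<Sum>c\<in>Pow Q. cnj (v a) * A a c * B c d * cnj (A b d) * v b)"
    by (simp add: qform_def op_mult_def op_adj_def sum_distrib_left sum_distrib_right mult_ac)
  also have "\<dots> = (\<Sum>d\<in>Pow Q. \<Sum>c\<in>Pow Q. \<Sum>a\<in>Pow Q. \<Sum>b\<in>Pow Q. cnj (v a) * A a c * B c d * cnj (A b d) * v b)"
    by (rule sum_swap_pairs)
  also have "\<dots> = qform Q B (\<lambda>c. \<Sum>a\<in>Pow Q. cnj (A a c) * v a)"
    by (subst sum.swap) (simp add: qform_def sum_distrib_left sum_distrib_right mult_ac)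
  finally show ?thesis .
qed

lemma psd_op_conj: "psd_op Q B \<Longrightarrow> psd_op Q (op_mult Q (op_mult Q A B) (op_adj A))"
  unfolding psd_op_def qform_conj by blast

lemma op_trace_conj_unitary:
  assumes "finite Q" "unitary_op Q A"
  shows "op_trace Q (op_mult Q (op_mult Q A B) (op_adj A)) = op_trace Q B"
proof -
  have "op_trace Q (op_mult Q (op_mult Q A B) (op_adj A)) =
     (\<Sum>c\<in>Pow Q. \<Sum>d\<in>Pow Q. B c d * op_mult Q (op_adj A) A d c)"
    by (simp add: op_trace_def op_mult_def op_adj_def sum_distrib_left sum_distrib_right mult_ac)
      (subst sum_rotate3, subst sum.swap, rule refl)
  also have "\<dots> = (\<Sum>c\<in>Pow Q. \<Sum>d\<in>Pow Q. B c d * op_id d c)"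
    using assms(2) by (simp add: unitary_op_def)
  also have "\<dots> = op_trace Q B"
    using assms(1) by (simp add: op_trace_def op_id_def if_distrib_mult_cnj cong: if_cong)
  finally show ?thesis .
qed

lemma unitary_op_id: "finite Q \<Longrightarrow> unitary_op Q op_id"
  by (auto simp: unitary_op_def op_mult_def op_adj_def op_id_def if_distrib_mult_cnj cong: if_cong)

section \<open>Embeddings, partial traces and product states\<close>

lemma op_adj_embed: "op_adj (embed N A) = embed N (op_adj A)"
  by (auto simp: fun_eq_iff op_adj_def embed_def)

lemma op_mult_embed:
  assumes fin: "finite N" "finite R" and disj: "N \<inter> R = {}" and a: "a \<in> Pow (N \<union> R)"
  shows "op_mult (N \<union> R) (embed N A) (embed N B) a b = embed N (op_mult N A B) a b"
proof -
  have parts: "(c1 \<union> c2) \<inter> N = c1" "(c1 \<union> c2) - N = c2" if "c1 \<in> Pow N" "c2 \<in> Pow R" for c1 c2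
    using that disj by auto
  have "op_mult (N \<union> R) (embed N A) (embed N B) a b
      = (\<Sum>c1\<in>Pow N. \<Sum>c2\<in>Pow R. embed N A a (c1 \<union> c2) * embed N B (c1 \<union> c2) b)"
    unfolding op_mult_def by (rule sum_Pow_Un[OF fin disj])
  also have "\<dots> = (\<Sum>c1\<in>Pow N. if a - N = b - N then A (a \<inter> N) c1 * B c1 (b \<inter> N) else 0)"
    using a fin by (simp add: embed_def parts if_distrib_mult_cnj Diff_subset_conv cong: if_cong)
      (rule sum.cong; auto)
  also have "\<dots> = embed N (op_mult N A B) a b"
    by (simp add: embed_def op_mult_def)
  finally show ?thesis .
qed

lemma unitary_op_embed:
  assumes fin: "finite N" "finite R" and disj: "N \<inter> R = {}" and V: "unitary_op N V"
  shows "unitary_op (N \<union> R) (embed N V)"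
proof -
  have "embed N (op_mult N V (op_adj V)) a b = op_id a b"
    and "embed N (op_mult N (op_adj V) V) a b = op_id a b" for a b
    using V by (auto simp: unitary_op_def embed_def op_id_def)
  then show ?thesis
    unfolding unitary_op_def op_adj_embed using op_mult_embed[OF fin disj] by simp
qed

lemma ptrace_trace:
  assumes "finite Y" "finite Z" "Y \<inter> Z = {}"
  shows "op_trace Y (ptrace Z A) = op_trace (Y \<union> Z) A"
  by (simp add: op_trace_def ptrace_def sum_Pow_Un[OF assms])

lemma ptrace_ptrace:
  assumes "finite Y" "finite Z" "Y \<inter> Z = {}"
  shows "ptrace Y (ptrace Z A) a b = ptrace (Y \<union> Z) A a b"
  by (simp add: ptrace_def sum_Pow_Un[OF assms] Un_assoc)

lemma qform_ptrace:
  assumes fin: "finite Y" "finite Z" and disj: "Y \<inter> Z = {}"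
  shows "qform Y (ptrace Z A) v = (\<Sum>z\<in>Pow Z. qform (Y \<union> Z) A (\<lambda>d. if d \<inter> Z = z then v (d \<inter> Y) else 0))"
proof -
  define w where "w = (\<lambda>z d. if d \<inter> Z = z then v (d \<inter> Y) else 0)"
  have w: "w z (y \<union> z') = (if z' = z then v y else 0)" if "y \<in> Pow Y" "z' \<in> Pow Z" for y z' z
  proof -
    have "(y \<union> z') \<inter> Z = z'" "(y \<union> z') \<inter> Y = y" using that disj by auto
    then show ?thesis by (auto simp: w_def)
  qed
  have "qform (Y \<union> Z) A (w z) =
     (\<Sum>y\<in>Pow Y. \<Sum>y2\<in>Pow Y. cnj (v y) * A (y \<union> z) (y2 \<union> z) * v y2)" if "z \<in> Pow Z" for z
  proof -
    have "qform (Y \<union> Z) A (w z) = (\<Sum>y\<in>Pow Y. \<Sum>y2\<in>Pow Y. \<Sum>z'\<in>Pow Z. \<Sum>z2\<in>Pow Z.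
        cnj (w z (y \<union> z')) * A (y \<union> z') (y2 \<union> z2) * w z (y2 \<union> z2))"
      unfolding qform_def sum_Pow_Un[OF fin disj] by (intro sum.cong refl sum.swap)
    then show ?thesis
      using that fin by (simp add: w if_distrib_mult_cnj cong: if_cong)
  qed
  then have "(\<Sum>z\<in>Pow Z. qform (Y \<union> Z) A (w z)) =
     (\<Sum>z\<in>Pow Z. \<Sum>y\<in>Pow Y. \<Sum>y2\<in>Pow Y. cnj (v y) * A (y \<union> z) (y2 \<union> z) * v y2)"
    by simp
  also have "\<dots> = (\<Sum>y\<in>Pow Y. \<Sum>y2\<in>Pow Y. \<Sum>z\<in>Pow Z. cnj (v y) * A (y \<union> z) (y2 \<union> z) * v y2)"
    by (rule sum_rotate3)
  also have "\<dots> = qform Y (ptrace Z A) v"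
    by (simp add: qform_def ptrace_def sum_distrib_left sum_distrib_right)
  finally show ?thesis
    by (simp add: w_def)
qed

lemma psd_op_ptrace:
  assumes "finite Y" "finite Z" "Y \<inter> Z = {}" "psd_op (Y \<union> Z) A"
  shows "psd_op Y (ptrace Z A)"
  using assms(4) unfolding psd_op_def qform_ptrace[OF assms(1-3)] Im_sum Re_sum
  by (simp add: sum_nonneg)

lemma proj_tensor_Un:
  assumes "P \<inter> R = {}" "a1 \<in> Pow P" "b1 \<in> Pow P" "a2 \<in> Pow R" "b2 \<in> Pow R"
  shows "proj_tensor P \<psi> \<rho> (a1 \<union> a2) (b1 \<union> b2) = \<psi> a1 * cnj (\<psi> b1) * \<rho> a2 b2"
proof -
  have "(a1 \<union> a2) \<inter> P = a1" "(b1 \<union> b2) \<inter> P = b1" "a1 \<union> a2 - P = a2" "b1 \<union> b2 - P = b2"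
    using assms by auto
  then show ?thesis
    by (simp add: proj_tensor_def)
qed

lemma qform_proj_tensor:
  assumes fin: "finite P" "finite R" and disj: "P \<inter> R = {}"
  shows "qform (P \<union> R) (proj_tensor P \<psi> \<rho>) w = qform R \<rho> (\<lambda>a2. \<Sum>a1\<in>Pow P. cnj (\<psi> a1) * w (a1 \<union> a2))"
proof -
  have "qform (P \<union> R) (proj_tensor P \<psi> \<rho>) w = (\<Sum>a1\<in>Pow P. \<Sum>a2\<in>Pow R. \<Sum>b1\<in>Pow P. \<Sum>b2\<in>Pow R.
      cnj (w (a1 \<union> a2)) * (\<psi> a1 * cnj (\<psi> b1) * \<rho> a2 b2) * w (b1 \<union> b2))"
    unfolding qform_def sum_Pow_Un[OF fin disj] using disj by (intro sum.cong refl) (simp add: proj_tensor_Un)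
  also have "\<dots> = (\<Sum>a1\<in>Pow P. \<Sum>b1\<in>Pow P. \<Sum>a2\<in>Pow R. \<Sum>b2\<in>Pow R.
      cnj (w (a1 \<union> a2)) * (\<psi> a1 * cnj (\<psi> b1) * \<rho> a2 b2) * w (b1 \<union> b2))"
    by (rule sum.cong[OF refl], rule sum.swap)
  also have "\<dots> = (\<Sum>a2\<in>Pow R. \<Sum>b2\<in>Pow R. \<Sum>a1\<in>Pow P. \<Sum>b1\<in>Pow P.
      cnj (w (a1 \<union> a2)) * (\<psi> a1 * cnj (\<psi> b1) * \<rho> a2 b2) * w (b1 \<union> b2))"
    by (rule sum_swap_pairs)
  also have "\<dots> = qform R \<rho> (\<lambda>a2. \<Sum>a1\<in>Pow P. cnj (\<psi> a1) * w (a1 \<union> a2))"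
    by (simp add: qform_def sum_distrib_left sum_distrib_right mult_ac)
  finally show ?thesis .
qed

lemma psd_op_proj_tensor:
  assumes "finite P" "finite R" "P \<inter> R = {}" "psd_op R \<rho>"
  shows "psd_op (P \<union> R) (proj_tensor P \<psi> \<rho>)"
  using assms(4) unfolding psd_op_def qform_proj_tensor[OF assms(1-3)] by blast

lemma op_trace_proj_tensor:
  assumes fin: "finite P" "finite R" and disj: "P \<inter> R = {}"
  shows "op_trace (P \<union> R) (proj_tensor P \<psi> \<rho>) = (\<Sum>a\<in>Pow P. cnj (\<psi> a) * \<psi> a) * op_trace R \<rho>"
  using disj by (simp add: op_trace_def sum_Pow_Un[OF fin disj] proj_tensor_Un sum_product mult_ac)
    (rule sum.swap)

lemma density_op_evolved:
  assumes psi: "unit_vec {1} \<psi>" and rho: "density_op {2..n+1} \<rho>" and V: "unitary_op {1..n} V"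
  shows "density_op {1..n+1} (evolved n \<psi> \<rho> V)"
proof -
  have split_first: "{1..n+1} = {1} \<union> {2..n+1}" and split_last: "{1..n+1} = {1..n} \<union> {n+1}"
    by auto
  have "psd_op {1..n+1} (proj_tensor {1} \<psi> \<rho>)"
    unfolding split_first using rho by (intro psd_op_proj_tensor) (auto simp: density_op_iff_trace_psd)
  moreover have "op_trace {1..n+1} (proj_tensor {1} \<psi> \<rho>) = 1"
    unfolding split_first using psi rho
    by (subst op_trace_proj_tensor) (auto simp: unit_vec_def density_op_iff_trace_psd)
  moreover have "unitary_op {1..n+1} (embed {1..n} V)"
    unfolding split_last using V by (intro unitary_op_embed) auto
  ultimately show ?thesis
    unfolding density_op_iff_trace_psd evolved_def by (simp add: psd_op_conj op_trace_conj_unitary)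
qed

section \<open>Measuring the qubits X\<close>

(* For \<phi> the row <t|U this is <\<chi>|_X M |\<chi>>_X with \<chi> = U^\<dagger>|t> = conj \<phi>. *)
definition partial_sandwich :: "nat set \<Rightarrow> qvec \<Rightarrow> qop \<Rightarrow> qop" where
  "partial_sandwich X \<phi> M = (\<lambda>a b. \<Sum>x\<in>Pow X. \<Sum>y\<in>Pow X. \<phi> x * M (x \<union> a) (y \<union> b) * cnj (\<phi> y))"

lemma qform_partial_sandwich:
  assumes fin: "finite X" "finite S" and disj: "X \<inter> S = {}"
  shows "qform S (partial_sandwich X \<phi> M) v = qform (X \<union> S) M (\<lambda>d. cnj (\<phi> (d \<inter> X)) * v (d \<inter> S))"
proof -
  have parts: "(x \<union> a) \<inter> X = x" "(x \<union> a) \<inter> S = a" if "x \<in> Pow X" "a \<in> Pow S" for x a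
    using that disj by auto
  have "qform (X \<union> S) M (\<lambda>d. cnj (\<phi> (d \<inter> X)) * v (d \<inter> S)) =
    (\<Sum>x\<in>Pow X. \<Sum>a\<in>Pow S. \<Sum>y\<in>Pow X. \<Sum>b\<in>Pow S. cnj (v a) * (\<phi> x * M (x \<union> a) (y \<union> b) * cnj (\<phi> y)) * v b)"
    unfolding qform_def sum_Pow_Un[OF fin disj] by (intro sum.cong refl) (simp add: parts mult_ac)
  also have "\<dots> = (\<Sum>x\<in>Pow X. \<Sum>y\<in>Pow X. \<Sum>a\<in>Pow S. \<Sum>b\<in>Pow S.
       cnj (v a) * (\<phi> x * M (x \<union> a) (y \<union> b) * cnj (\<phi> y)) * v b)"
    by (rule sum.cong[OF refl], rule sum.swap)
  also have "\<dots> = (\<Sum>a\<in>Pow S. \<Sum>b\<in>Pow S. \<Sum>x\<in>Pow X. \<Sum>y\<in>Pow X.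
       cnj (v a) * (\<phi> x * M (x \<union> a) (y \<union> b) * cnj (\<phi> y)) * v b)"
    by (rule sum_swap_pairs)
  also have "\<dots> = qform S (partial_sandwich X \<phi> M) v"
    by (simp add: qform_def partial_sandwich_def sum_distrib_left sum_distrib_right)
  finally show ?thesis ..
qed

lemma psd_op_partial_sandwich:
  assumes "finite X" "finite S" "X \<inter> S = {}" "psd_op (X \<union> S) M"
  shows "psd_op S (partial_sandwich X \<phi> M)"
  using assms(4) unfolding psd_op_def qform_partial_sandwich[OF assms(1-3)] by blast

lemma op_trace_partial_sandwich:
  "op_trace S (partial_sandwich X \<phi> M) = (\<Sum>x\<in>Pow X. \<Sum>y\<in>Pow X. \<phi> x * ptrace S M x y * cnj (\<phi> y))"
  unfolding op_trace_def partial_sandwich_def ptrace_def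
  by (subst sum_rotate3) (simp add: sum_distrib_left sum_distrib_right)

lemma sum_embed_row:
  assumes fin: "finite X" "finite S" and disj: "X \<inter> S = {}" and a: "a \<in> Pow S" and c: "c \<in> Pow X"
  shows "(\<Sum>d\<in>Pow (X \<union> S). embed X K (a \<union> c) d * f d) = (\<Sum>x\<in>Pow X. K c x * f (x \<union> a))"
proof -
  have "(a \<union> c) - X = a" "(a \<union> c) \<inter> X = c"
    using a c disj by auto
  moreover have "(x \<union> s) - X = s" "(x \<union> s) \<inter> X = x" if "x \<in> Pow X" "s \<in> Pow S" for x s
    using that disj by auto
  ultimately show ?thesis
    using a fin by (simp add: sum_Pow_Un[OF fin disj] embed_def if_distrib_mult_cnj cong: if_cong)
qed

lemma sum_embed_col:
  assumes fin: "finite X" "finite S" and disj: "X \<inter> S = {}" and b: "b \<in> Pow S" and c: "c \<in> Pow X"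
  shows "(\<Sum>e\<in>Pow (X \<union> S). f e * embed X K e (b \<union> c)) = (\<Sum>y\<in>Pow X. f (y \<union> b) * K y c)"
proof -
  have "(b \<union> c) - X = b" "(b \<union> c) \<inter> X = c"
    using b c disj by auto
  moreover have "(y \<union> s) - X = s" "(y \<union> s) \<inter> X = y" if "y \<in> Pow X" "s \<in> Pow S" for y s
    using that disj by auto
  ultimately show ?thesis
    using b fin by (simp add: sum_Pow_Un[OF fin disj] embed_def if_distrib_mult_cnj cong: if_cong)
qed

lemma ptrace_embed_meas_proj:
  fixes U :: qop and t :: "nat set"
  assumes fin: "finite X" "finite S" and disj: "X \<inter> S = {}" and a: "a \<in> Pow S" and b: "b \<in> Pow S"
  defines "P \<equiv> embed X (meas_proj U t)"
  shows "ptrace X (op_mult (X \<union> S) (op_mult (X \<union> S) P M) P) a b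
     = (\<Sum>c\<in>Pow X. cnj (U t c) * U t c) * partial_sandwich X (U t) M a b"
proof -
  have "ptrace X (op_mult (X \<union> S) (op_mult (X \<union> S) P M) P) a b
     = (\<Sum>c\<in>Pow X. \<Sum>e\<in>Pow (X \<union> S). (\<Sum>d\<in>Pow (X \<union> S). P (a \<union> c) d * M d e) * P e (b \<union> c))"
    by (simp add: ptrace_def op_mult_def)
  also have "\<dots> = (\<Sum>c\<in>Pow X. \<Sum>y\<in>Pow X.
      (\<Sum>d\<in>Pow (X \<union> S). P (a \<union> c) d * M d (y \<union> b)) * meas_proj U t y c)"
    unfolding P_def using b by (intro sum.cong refl sum_embed_col[OF fin disj]) auto
  also have "\<dots> = (\<Sum>c\<in>Pow X. \<Sum>y\<in>Pow X.
      (\<Sum>x\<in>Pow X. meas_proj U t c x * M (x \<union> a) (y \<union> b)) * meas_proj U t y c)"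
    unfolding P_def using a by (simp add: sum_embed_row[OF fin disj])
  also have "\<dots> = (\<Sum>c\<in>Pow X. \<Sum>y\<in>Pow X. \<Sum>x\<in>Pow X. cnj (U t c) * U t x * M (x \<union> a) (y \<union> b) * cnj (U t y) * U t c)"
    by (simp add: meas_proj_def sum_distrib_left sum_distrib_right mult_ac)
  also have "\<dots> = (\<Sum>c\<in>Pow X. cnj (U t c) * U t c) * partial_sandwich X (U t) M a b"
    by (subst sum_rotate3, subst sum.swap)
      (simp add: partial_sandwich_def sum_distrib_left sum_distrib_right mult_ac)
  finally show ?thesis .
qed

lemma density_op_normalize:
  assumes "finite S" "psd_op S G" "Re (op_trace S G) > 0"
    and C: "\<And>a b. a \<in> Pow S \<Longrightarrow> b \<in> Pow S \<Longrightarrow> C a b = G a b / of_real (Re (op_trace S G))"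
  shows "density_op S C"
proof -
  define p where "p = Re (op_trace S G)"
  have p: "p > 0" "op_trace S G = of_real p"
    using assms(3) op_trace_psd[OF assms(2,1)] by (simp_all add: p_def complex_eq_iff)
  have C_p: "C a b = G a b / of_real p" if "a \<in> Pow S" "b \<in> Pow S" for a b
    using C[OF that] by (simp add: p_def)
  have "qform S C v = qform S G v / of_real p" for v
    unfolding qform_def by (simp add: C_p sum_divide_distrib)
  then have "psd_op S C"
    using assms(2) p(1) by (simp add: psd_op_def Re_divide_of_real Im_divide_of_real)
  moreover have "op_trace S C = op_trace S G / of_real p"
    unfolding op_trace_def by (simp add: C_p sum_divide_distrib)
  then have "op_trace S C = 1"
    using p by simp
  ultimately show ?thesis
    by (simp add: density_op_iff_trace_psd)
qed

lemma two_qubit_state_to_2qubit: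
  assumes SR: "S \<noteq> R" and K: "density_op {S, R} K"
  shows "two_qubit_state (to_2qubit S R K)"
proof -
  define idx where "idx i = (if i div 2 = 1 then {S} else {}) \<union> (if i mod 2 = 1 then {R} else {})" for i :: nat
  have four: "{..<4::nat} = {0, 1, 2, 3}" by auto
  have idx_simps: "idx 0 = {}" "idx (Suc 0) = {R}" "idx 2 = {S}" "idx 3 = {S, R}"
    by (auto simp: idx_def)
  have "inj_on idx {..<4}"
    unfolding four inj_on_def using SR by (auto simp: idx_simps doubleton_eq_iff)
  moreover have "idx ` {..<4} = Pow {S, R}"
    unfolding four by (auto simp: idx_simps Pow_insert)
  ultimately have bij: "bij_betw idx {..<4} (Pow {S, R})"
    by (simp add: bij_betw_def)
  have entry: "to_2qubit S R K $$ (i, j) = K (idx i) (idx j)" if "i < 4" "j < 4" for i j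
    using that by (simp add: to_2qubit_def idx_def)
  have "(\<Sum>i<4. to_2qubit S R K $$ (i, i)) = op_trace {S, R} K"
    unfolding op_trace_def using sum.reindex_bij_betw[OF bij, of "\<lambda>a. K a a"] by (simp add: entry)
  moreover have "(\<Sum>i<4. \<Sum>j<4. cnj (v i) * to_2qubit S R K $$ (i, j) * v j)
      = qform {S, R} K (\<lambda>a. v (inv_into {..<4} idx a))" for v :: "nat \<Rightarrow> complex"
  proof -
    define w where "w = (\<lambda>a. v (inv_into {..<4} idx a))"
    have w: "w (idx i) = v i" if "i < 4" for i
      using bij_betw_inv_into_left[OF bij] that by (simp add: w_def)
    have "(\<Sum>i<4. \<Sum>j<4. cnj (v i) * to_2qubit S R K $$ (i, j) * v j)
        = (\<Sum>i<4. \<Sum>j<4. cnj (w (idx i)) * K (idx i) (idx j) * w (idx j))"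
      by (intro sum.cong refl) (simp add: entry w)
    also have "\<dots> = (\<Sum>i<4. \<Sum>b\<in>Pow {S, R}. cnj (w (idx i)) * K (idx i) b * w b)"
      by (intro sum.cong refl sum.reindex_bij_betw[OF bij])
    also have "\<dots> = qform {S, R} K w"
      unfolding qform_def by (rule sum.reindex_bij_betw[OF bij])
    finally show ?thesis
      unfolding w_def .
  qed
  ultimately show ?thesis
    using K unfolding two_qubit_state_def density_op_iff_trace_psd psd_op_def
    by (simp add: to_2qubit_def)
qed

section \<open>The conditional states of the protocol\<close>

definition cond_state_unnormalized :: "nat \<Rightarrow> qvec \<Rightarrow> qop \<Rightarrow> qop \<Rightarrow> qop \<Rightarrow> nat set \<Rightarrow> qop" where
  "cond_state_unnormalized n \<psi> \<rho> V U t = partial_sandwich {3..n} (U t) (ptrace {1} (evolved n \<psi> \<rho> V))"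

lemma prob_t_eq_trace:
  assumes "n \<ge> 2"
  shows "prob_t n \<psi> \<rho> V U t = Re (op_trace {2, n+1} (cond_state_unnormalized n \<psi> \<rho> V U t))"
proof -
  have "{1..n+1} - {3..n} = {2, n+1} \<union> {1}"
    using assms by auto
  then have "ptrace ({1..n+1} - {3..n}) (evolved n \<psi> \<rho> V) x y
      = ptrace {2, n+1} (ptrace {1} (evolved n \<psi> \<rho> V)) x y" for x y
    using assms by (simp add: ptrace_ptrace)
  then show ?thesis
    by (simp add: prob_t_def cond_state_unnormalized_def op_trace_partial_sandwich)
qed

lemma psd_op_cond_state_unnormalized:
  assumes n: "n \<ge> 2" and psi: "unit_vec {1} \<psi>" and rho: "density_op {2..n+1} \<rho>"
    and V: "unitary_op {1..n} V"
  shows "psd_op {2, n+1} (cond_state_unnormalized n \<psi> \<rho> V U t)"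
proof -
  have "{1..n+1} = ({3..n} \<union> {2, n+1}) \<union> {1}"
    using n by auto
  then have "psd_op ({3..n} \<union> {2, n+1}) (ptrace {1} (evolved n \<psi> \<rho> V))"
    using density_op_evolved[OF psi rho V] n
    by (intro psd_op_ptrace) (auto simp: density_op_iff_trace_psd)
  then show ?thesis
    unfolding cond_state_unnormalized_def by (rule psd_op_partial_sandwich[rotated 3]) auto
qed

lemma prob_t_nonneg:
  assumes "n \<ge> 2" "unit_vec {1} \<psi>" "density_op {2..n+1} \<rho>" "unitary_op {1..n} V"
  shows "prob_t n \<psi> \<rho> V U t \<ge> 0"
  using op_trace_psd[OF psd_op_cond_state_unnormalized[OF assms]] prob_t_eq_trace[OF assms(1)]
  by simp

lemma cond_state_eq:
  assumes n: "n \<ge> 2" and U: "unitary_op {3..n} U" and t: "t \<in> Pow {3..n}"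
    and a: "a \<in> Pow {2, n+1}" and b: "b \<in> Pow {2, n+1}"
  shows "cond_state n \<psi> \<rho> V U t a b
    = cond_state_unnormalized n \<psi> \<rho> V U t a b / of_real (prob_t n \<psi> \<rho> V U t)"
proof -
  have split: "{2..n+1} = {3..n} \<union> {2, n+1}"
    using n by auto
  have "(\<Sum>c\<in>Pow {3..n}. cnj (U t c) * U t c) = op_mult {3..n} U (op_adj U) t t"
    by (simp add: op_mult_def op_adj_def mult.commute)
  also have "\<dots> = 1"
    using U t by (simp add: unitary_op_def op_id_def)
  finally show ?thesis
    unfolding cond_state_def Let_def split cond_state_unnormalized_def
    using ptrace_embed_meas_proj[of "{3..n}" "{2, n+1}" a b U t] a b by simp
qed

lemma sum_prob_t:
  assumes psi: "unit_vec {1} \<psi>" and rho: "density_op {2..n+1} \<rho>"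
    and V: "unitary_op {1..n} V" and U: "unitary_op {3..n} U"
  shows "(\<Sum>t\<in>Pow {3..n}. prob_t n \<psi> \<rho> V U t) = 1"
proof -
  define E where "E = evolved n \<psi> \<rho> V"
  define X where "X = {3..n::nat}"
  define \<rho>X where "\<rho>X = ptrace ({1..n+1} - X) E"
  have "(\<Sum>t\<in>Pow X. \<Sum>x\<in>Pow X. \<Sum>y\<in>Pow X. U t x * \<rho>X x y * cnj (U t y))
      = (\<Sum>x\<in>Pow X. \<Sum>y\<in>Pow X. \<rho>X x y * op_mult X (op_adj U) U y x)"
    by (subst sum_rotate3) (simp add: op_mult_def op_adj_def sum_distrib_left mult_ac)
  also have "\<dots> = op_trace X \<rho>X"
    using U unfolding X_def
    by (simp add: unitary_op_def op_trace_def op_id_def if_distrib_mult_cnj cong: if_cong)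
  also have "\<dots> = op_trace {1..n+1} E"
    unfolding \<rho>X_def X_def by (subst ptrace_trace) (auto intro: arg_cong2[where f = op_trace])
  also have "\<dots> = 1"
    using density_op_evolved[OF psi rho V] by (simp add: E_def density_op_iff_trace_psd)
  finally show ?thesis
    by (simp add: prob_t_def E_def X_def \<rho>X_def flip: Re_sum)
qed

lemma sum_prob_t_positive:
  assumes "n \<ge> 2" "unit_vec {1} \<psi>" "density_op {2..n+1} \<rho>" "unitary_op {1..n} V"
    and "unitary_op {3..n} U"
  shows "(\<Sum>t\<in>{t. t \<subseteq> {3..n} \<and> prob_t n \<psi> \<rho> V U t > 0}. prob_t n \<psi> \<rho> V U t) = 1"
proof -
  have "(\<Sum>t\<in>{t. t \<subseteq> {3..n} \<and> prob_t n \<psi> \<rho> V U t > 0}. prob_t n \<psi> \<rho> V U t)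
      = (\<Sum>t\<in>Pow {3..n}. prob_t n \<psi> \<rho> V U t)"
    using prob_t_nonneg[OF assms(1-4)] by (intro sum.mono_neutral_left) (auto simp: less_le)
  then show ?thesis
    using sum_prob_t[OF assms(2-5)] by simp
qed

lemma two_qubit_state_cond_state:
  assumes n: "n \<ge> 2" and psi: "unit_vec {1} \<psi>" and rho: "density_op {2..n+1} \<rho>"
    and V: "unitary_op {1..n} V" and U: "unitary_op {3..n} U" and t: "t \<in> Pow {3..n}"
    and pos: "prob_t n \<psi> \<rho> V U t > 0"
  shows "two_qubit_state (to_2qubit 2 (n+1) (cond_state n \<psi> \<rho> V U t))"
proof (rule two_qubit_state_to_2qubit)
  show "density_op {2, n+1} (cond_state n \<psi> \<rho> V U t)"
    using psd_op_cond_state_unnormalized[OF n psi rho V] pos cond_state_eq[OF n U t]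
    unfolding prob_t_eq_trace[OF n] by (intro density_op_normalize) auto
qed (use n in auto)

section \<open>The fidelity--concurrence region\<close>

definition fidelity_bounds :: "real \<Rightarrow> real \<Rightarrow> bool" where
  "fidelity_bounds C F \<longleftrightarrow> max ((3 + C) / 6) ((1 + 2 * C) / 3) \<le> F \<and> F \<le> (2 + C) / 3"

lemma fidelity_bounds_convex_sum:
  fixes p c f :: "'a \<Rightarrow> real"
  assumes p: "\<And>t. t \<in> A \<Longrightarrow> 0 \<le> p t" "sum p A = 1"
    and bounds: "\<And>t. t \<in> A \<Longrightarrow> fidelity_bounds (c t) (f t)"
  shows "fidelity_bounds (\<Sum>t\<in>A. p t * c t) (\<Sum>t\<in>A. p t * f t)"
proof -
  have affine: "(\<Sum>t\<in>A. p t * (\<alpha> + \<beta> * c t)) = \<alpha> + \<beta> * (\<Sum>t\<in>A. p t * c t)" for \<alpha> \<beta>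
    using p(2) by (simp add: distrib_left sum.distrib mult.left_commute flip: sum_distrib_left sum_distrib_right)
  have below: "\<alpha> + \<beta> * (\<Sum>t\<in>A. p t * c t) \<le> (\<Sum>t\<in>A. p t * f t)"
    if "\<And>t. t \<in> A \<Longrightarrow> \<alpha> + \<beta> * c t \<le> f t" for \<alpha> \<beta>
    unfolding affine[symmetric] using that p(1) by (intro sum_mono mult_left_mono) auto
  have above: "(\<Sum>t\<in>A. p t * f t) \<le> \<alpha> + \<beta> * (\<Sum>t\<in>A. p t * c t)"
    if "\<And>t. t \<in> A \<Longrightarrow> f t \<le> \<alpha> + \<beta> * c t" for \<alpha> \<beta>
    unfolding affine[symmetric] using that p(1) by (intro sum_mono mult_left_mono) auto
  have "1/2 + 1/6 * (\<Sum>t\<in>A. p t * c t) \<le> (\<Sum>t\<in>A. p t * f t)"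
    by (rule below) (use bounds in \<open>fastforce simp: fidelity_bounds_def\<close>)
  moreover have "1/3 + 2/3 * (\<Sum>t\<in>A. p t * c t) \<le> (\<Sum>t\<in>A. p t * f t)"
    by (rule below) (use bounds in \<open>fastforce simp: fidelity_bounds_def\<close>)
  moreover have "(\<Sum>t\<in>A. p t * f t) \<le> 2/3 + 1/3 * (\<Sum>t\<in>A. p t * c t)"
    by (rule above) (use bounds in \<open>fastforce simp: fidelity_bounds_def\<close>)
  ultimately show ?thesis
    by (simp add: fidelity_bounds_def)
qed

lemma fidelity_bounds_SUP:
  fixes c f :: "'a \<Rightarrow> real"
  assumes "I \<noteq> {}" and bounds: "\<And>i. i \<in> I \<Longrightarrow> fidelity_bounds (c i) (f i)"
  shows "fidelity_bounds (SUP i\<in>I. c i) (SUP i\<in>I. f i)"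
proof -
  have le_1: "c i \<le> 1" "f i \<le> 1" if "i \<in> I" for i
    using bounds[OF that] by (auto simp: fidelity_bounds_def)
  have c_le: "c i \<le> (SUP i\<in>I. c i)" and f_le: "f i \<le> (SUP i\<in>I. f i)" if "i \<in> I" for i
    using le_1 that by (auto intro!: cSUP_upper bdd_aboveI2)
  have "(SUP i\<in>I. f i) \<le> (2 + (SUP i\<in>I. c i)) / 3"
    using bounds c_le by (intro cSUP_least[OF assms(1)]) (fastforce simp: fidelity_bounds_def)
  moreover have "(SUP i\<in>I. c i) \<le> 6 * (SUP i\<in>I. f i) - 3"
    using bounds f_le by (intro cSUP_least[OF assms(1)]) (fastforce simp: fidelity_bounds_def)
  moreover have "(SUP i\<in>I. c i) \<le> (3 * (SUP i\<in>I. f i) - 1) / 2"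
    using bounds f_le by (intro cSUP_least[OF assms(1)]) (fastforce simp: fidelity_bounds_def)
  ultimately show ?thesis
    by (simp add: fidelity_bounds_def)
qed

theorem proposition1:
  fixes n :: nat and \<psi> :: qvec and \<rho> V :: qop and F :: "complex mat \<Rightarrow> real"
  assumes F_known: "\<And>\<sigma>. two_qubit_state \<sigma> \<Longrightarrow>
             max ((3 + concurrence \<sigma>) / 6) ((1 + 2 * concurrence \<sigma>) / 3) \<le> F \<sigma> \<and>
             F \<sigma> \<le> (2 + concurrence \<sigma>) / 3"
    and n: "n \<ge> 2"
    and psi: "unit_vec {1} \<psi>"
    and rho: "density_op {2..n+1} \<rho>"
    and V: "unitary_op {1..n} V"
  shows "max ((3 + localizable_concurrence n \<psi> \<rho> V) / 6)
             ((1 + 2 * localizable_concurrence n \<psi> \<rho> V) / 3)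
           \<le> teleportation_fidelity F n \<psi> \<rho> V
         \<and> teleportation_fidelity F n \<psi> \<rho> V \<le> (2 + localizable_concurrence n \<psi> \<rho> V) / 3"
proof -
  define p where "p U t = prob_t n \<psi> \<rho> V U t" for U t
  define \<sigma> where "\<sigma> U t = to_2qubit 2 (n+1) (cond_state n \<psi> \<rho> V U t)" for U t
  define outcomes where "outcomes U = {t. t \<subseteq> {3..n} \<and> p U t > 0}" for U
  have "fidelity_bounds (\<Sum>t\<in>outcomes U. p U t * concurrence (\<sigma> U t)) (\<Sum>t\<in>outcomes U. p U t * F (\<sigma> U t))"
    if U: "unitary_op {3..n} U" for U
  proof (rule fidelity_bounds_convex_sum)
    show "sum (p U) (outcomes U) = 1"
      using sum_prob_t_positive[OF n psi rho V U] by (simp add: p_def outcomes_def)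
    show "fidelity_bounds (concurrence (\<sigma> U t)) (F (\<sigma> U t))" if "t \<in> outcomes U" for t
      using F_known two_qubit_state_cond_state[OF n psi rho V U] that
      by (simp add: fidelity_bounds_def \<sigma>_def outcomes_def p_def)
  qed (simp add: outcomes_def)
  then have "fidelity_bounds (localizable_concurrence n \<psi> \<rho> V) (teleportation_fidelity F n \<psi> \<rho> V)"
    unfolding localizable_concurrence_def teleportation_fidelity_def
    using unitary_op_id[of "{3..n}"]
    by (intro fidelity_bounds_SUP) (auto simp: outcomes_def p_def \<sigma>_def)
  then show ?thesis
    by (simp add: fidelity_bounds_def)
qed

end
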